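(* No judgment aggregation rule satisfies both the maximin property and the equity property.
   Context: An agenda is a finite nonempty list $\Phi=(\phi_1,\dots,\phi_m)$ of propositional formulas; a judgment is a vector $J\in\{0,1\}^m$, where $J(\phi_k)\in\{0,1\}$ is its $k$-th entry (1 = accepted, 0 = rejected). $\mathcal{J}(\Phi)\subseteq\{0,1\}^m$ is the nonempty set of admissible (logically consistent) judgments for $\Phi$; the agenda may be chosen so that $\mathcal{J}(\Phi)$ is any prescribed nonempty set of vectors. For a finite set of agents $N$ with $|N|=n\ge 2$, a profile is $\mathbf{P}=(J_1,\dots,J_n)\in\mathcal{J}(\Phi)^n$. A judgment aggregation rule $F$ maps every profile, for every finite group $N$ and every agenda $\Phi$, to a nonempty set $F(\mathbf{P})\subseteq\mathcal{J}(\Phi)$. The Hamming distance is $H(J,J')=\sum_{k=1}^m|J(\phi_k)-J'(\phi_k)|$. $F$ satisfies the maximin property if for all profiles $\mathbf{P}$ and all $J\in F(\mathbf{P})$ there do not exist $J'\in\mathcal{J}(\Phi)$ and $j\in N$ with $H(J_i,J')<H(J_j,J)$ for all $i\in N$. $F$ satisfies the equity property if for all profiles $\mathbf{P}$ and all $J\in F(\mathbf{P})$ there do not exist $J'\in\mathcal{J}(\Phi)$ and $i',j'\in N$ with $|H(J_i,J')-H(J_j,J')|<|H(J_{i'},J)-H(J_{j'},J)|$ for all $i,j\in N$. *)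

theory Defs
  imports Main
begin

text \<open>Judgments are 0/1 vectors of length m, represented as bool lists (True = accepted).
  An agenda is represented by its set A of admissible judgments (any nonempty set of
  length-m vectors, m \<ge> 1, can be realised).\<close>

definition hamming :: "bool list \<Rightarrow> bool list \<Rightarrow> nat" where
  "hamming J J' = card {k. k < length J \<and> J ! k \<noteq> J' ! k}"

definition valid_agenda :: "nat \<Rightarrow> bool list set \<Rightarrow> bool" where
  "valid_agenda m A \<longleftrightarrow> 0 < m \<and> A \<noteq> {} \<and> (\<forall>J\<in>A. length J = m)"

definition valid_group :: "nat set \<Rightarrow> bool" where
  "valid_group N \<longleftrightarrow> finite N \<and> 2 \<le> card N"

definition is_profile :: "nat set \<Rightarrow> bool list set \<Rightarrow> (nat \<Rightarrow> bool list) \<Rightarrow> bool" where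
  "is_profile N A P \<longleftrightarrow> (\<forall>i\<in>N. P i \<in> A)"

type_synonym rule = "nat set \<Rightarrow> bool list set \<Rightarrow> (nat \<Rightarrow> bool list) \<Rightarrow> bool list set"

definition is_rule :: "rule \<Rightarrow> bool" where
  "is_rule F \<longleftrightarrow> (\<forall>N m A P. valid_group N \<and> valid_agenda m A \<and> is_profile N A P
      \<longrightarrow> F N A P \<noteq> {} \<and> F N A P \<subseteq> A)"

definition maximin :: "rule \<Rightarrow> bool" where
  "maximin F \<longleftrightarrow> (\<forall>N m A P. valid_group N \<and> valid_agenda m A \<and> is_profile N A P
      \<longrightarrow> (\<forall>J\<in>F N A P. \<not> (\<exists>J'\<in>A. \<exists>j\<in>N.
             \<forall>i\<in>N. hamming (P i) J' < hamming (P j) J)))"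

definition equity :: "rule \<Rightarrow> bool" where
  "equity F \<longleftrightarrow> (\<forall>N m A P. valid_group N \<and> valid_agenda m A \<and> is_profile N A P
      \<longrightarrow> (\<forall>J\<in>F N A P. \<not> (\<exists>J'\<in>A. \<exists>i'\<in>N. \<exists>j'\<in>N. \<forall>i\<in>N. \<forall>j\<in>N.
             \<bar>int (hamming (P i) J') - int (hamming (P j) J')\<bar>
               < \<bar>int (hamming (P i') J) - int (hamming (P j') J)\<bar>)))"

end

theory Submission
  imports Defs
begin

text \<open>Take two agents with judgments at Hamming distance 2 and a third admissible judgment
  at distance 3 from both. Equity rules out either agent's own judgment, since there the
  distances differ by 2 while the third judgment equalises them; maximin rules out the
  third judgment, since its worst distance 3 exceeds the worst distance 2 at either agent's
  judgment. So no admissible judgment can be selected.\<close>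

lemma hamming_conv_length_filter:
  "hamming J J' = length (filter (\<lambda>k. J ! k \<noteq> J' ! k) [0..<length J])"
proof -
  have "{k. k < length J \<and> J ! k \<noteq> J' ! k} = set (filter (\<lambda>k. J ! k \<noteq> J' ! k) [0..<length J])"
    by auto
  then show ?thesis
    unfolding hamming_def by (metis distinct_card distinct_filter distinct_upt)
qed

lemma is_rule_selects:
  assumes "is_rule F" "valid_group N" "valid_agenda m A" "is_profile N A P"
  obtains J where "J \<in> F N A P" "J \<in> A"
  using assms unfolding is_rule_def by blast

lemma maximin_excludes:
  assumes "maximin F" "valid_group N" "valid_agenda m A" "is_profile N A P"
    and "J' \<in> A" "j \<in> N" "\<forall>i\<in>N. hamming (P i) J' < hamming (P j) J"
  shows "J \<notin> F N A P"
  using assms unfolding maximin_def by blast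

lemma equity_excludes:
  assumes "equity F" "valid_group N" "valid_agenda m A" "is_profile N A P"
    and "J' \<in> A" "i' \<in> N" "j' \<in> N"
    and "\<forall>i\<in>N. \<forall>j\<in>N. \<bar>int (hamming (P i) J') - int (hamming (P j) J')\<bar>
                        < \<bar>int (hamming (P i') J) - int (hamming (P j') J)\<bar>"
  shows "J \<notin> F N A P"
  using assms unfolding equity_def by blast

definition first_view :: "bool list" where "first_view = [False, False, False, False]"
definition second_view :: "bool list" where "second_view = [True, True, False, False]"
definition compromise :: "bool list" where "compromise = [True, False, True, True]"

lemma hamming_views:
  "hamming first_view first_view = 0" "hamming second_view second_view = 0"
  "hamming first_view second_view = 2" "hamming second_view first_view = 2"
  "hamming first_view compromise = 3" "hamming second_view compromise = 3"
  by (simp_all add: hamming_conv_length_filter first_view_def second_view_def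
      compromise_def upt_rec)

theorem proposition1:
  shows "\<not> (\<exists>F. is_rule F \<and> maximin F \<and> equity F)"
proof
  assume "\<exists>F. is_rule F \<and> maximin F \<and> equity F"
  then obtain F where rule: "is_rule F" and mm: "maximin F" and eq: "equity F" by blast
  define N :: "nat set" where "N = {0, 1}"
  define A where "A = {first_view, second_view, compromise}"
  define P :: "nat \<Rightarrow> bool list" where "P = (\<lambda>i. if i = 0 then first_view else second_view)"
  have setting: "valid_group N" "valid_agenda 4 A" "is_profile N A P"
    by (auto simp: valid_group_def valid_agenda_def is_profile_def N_def A_def P_def
        first_view_def second_view_def compromise_def)
  obtain J where J: "J \<in> F N A P" "J \<in> A"
    using is_rule_selects[OF rule setting] .
  have "first_view \<notin> F N A P" "second_view \<notin> F N A P"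
    by (rule equity_excludes[OF eq setting, of compromise 0 1];
        simp add: A_def N_def P_def hamming_views)+
  moreover have "compromise \<notin> F N A P"
    by (rule maximin_excludes[OF mm setting, of first_view 1];
        simp add: A_def N_def P_def hamming_views)
  ultimately show False
    using J by (auto simp: A_def)
qed

end
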